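(* Let $v=[q;w_1,\ldots,w_n]$ be a WVG and let $v'$ be obtained by splitting player $i$ into two sub-players $i',i''$ with nonnegative weights $w_{i'}+w_{i''}=w_i$. Then $\eta_{i'}(v')+\eta_{i''}(v')=2\eta_i(v)$, and for every player $x\neq i$, $\eta_x(v)\le \eta_x(v')$.
   Context: A weighted voting game (WVG) $v=[q;w_1,\ldots,w_n]$ has player set $N=\{1,\ldots,n\}$, nonnegative weights $w_j$ and quota $q$ with $0<q\le \sum_j w_j$; a coalition $S\subseteq N$ is winning iff $\sum_{j\in S}w_j\ge q$. Player $j$ is critical in a coalition $S$ if $S$ is winning and $S\setminus\{j\}$ is losing; $\eta_j(v)$ is the number of coalitions in which $j$ is critical. Splitting player $i$ into sub-players with nonnegative weights summing to $w_i$ produces the WVG with the same quota in which $i$ is replaced by the sub-players and all other players keep their weights. *)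

theory Defs
  imports Complex_Main
begin

definition wvg :: "'a set \<Rightarrow> ('a \<Rightarrow> real) \<Rightarrow> real \<Rightarrow> bool" where
  "wvg N w q \<longleftrightarrow> finite N \<and> (\<forall>j\<in>N. 0 \<le> w j) \<and> 0 < q \<and> q \<le> sum w N"

definition winning :: "'a set \<Rightarrow> ('a \<Rightarrow> real) \<Rightarrow> real \<Rightarrow> 'a set \<Rightarrow> bool" where
  "winning N w q S \<longleftrightarrow> S \<subseteq> N \<and> q \<le> sum w S"

definition critical :: "'a set \<Rightarrow> ('a \<Rightarrow> real) \<Rightarrow> real \<Rightarrow> 'a \<Rightarrow> 'a set \<Rightarrow> bool" where
  "critical N w q j S \<longleftrightarrow> winning N w q S \<and> \<not> winning N w q (S - {j})"

definition eta :: "'a set \<Rightarrow> ('a \<Rightarrow> real) \<Rightarrow> real \<Rightarrow> 'a \<Rightarrow> nat" where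
  "eta N w q j = card {S. S \<subseteq> N \<and> critical N w q j S}"

definition split_player ::
  "'a set \<Rightarrow> ('a \<Rightarrow> real) \<Rightarrow> 'a \<Rightarrow> 'a \<Rightarrow> 'a \<Rightarrow> 'a set \<Rightarrow> ('a \<Rightarrow> real) \<Rightarrow> bool" where
  "split_player N w i i1 i2 N' w' \<longleftrightarrow>
     i \<in> N \<and> i1 \<noteq> i2 \<and> i1 \<notin> N - {i} \<and> i2 \<notin> N - {i} \<and>
     N' = (N - {i}) \<union> {i1, i2} \<and>
     0 \<le> w' i1 \<and> 0 \<le> w' i2 \<and> w' i1 + w' i2 = w i \<and>
     (\<forall>x\<in>N - {i}. w' x = w x)"

end

theory Submission
  imports Defs
begin

(* Write N = M + {i} and N' = M + {i1, i2} with M = N - {i}.  Every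
   coalition of N is T or T + {i} for some T \<subseteq> M, and every coalition of N' is
   T, T + {i1}, T + {i2} or T + {i1, i2}; so each Banzhaf count eta becomes a sum
   over T \<subseteq> M.  A player x is critical in S iff x \<in> S and adding its weight to the
   losing coalition S - {x} makes it winning ("x swings").  With a = w' i1,
   b = w' i2 and t = w(T), the contributions of T are
     eta_i:            swing(a+b, t)
     eta_i1 + eta_i2:  swing(a, t) + swing(a, b+t) + swing(b, t) + swing(b, a+t),
   and an elementary case analysis shows the second is twice the first when
   a, b \<ge> 0.  For a player x \<noteq> i, its contributions from T and T + {i} reappear
   unchanged at T and T + {i1, i2} in N', which gives eta_x(v) \<le> eta_x(v'). *)

definition crit :: "('a \<Rightarrow> real) \<Rightarrow> real \<Rightarrow> 'a \<Rightarrow> 'a set \<Rightarrow> nat" where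
  "crit w q x S = (if q \<le> sum w S \<and> \<not> q \<le> sum w (S - {x}) then 1 else 0)"

definition swing :: "real \<Rightarrow> real \<Rightarrow> real \<Rightarrow> nat" where
  "swing q a t = (if q \<le> a + t \<and> \<not> q \<le> t then 1 else 0)"

lemma eta_as_sum:
  assumes "finite N"
  shows "eta N w q j = (\<Sum>S\<in>Pow N. crit w q j S)"
proof -
  let ?C = "{S\<in>Pow N. q \<le> sum w S \<and> \<not> q \<le> sum w (S - {j})}"
  have "{S. S \<subseteq> N \<and> critical N w q j S} = ?C"
    by (auto simp: critical_def winning_def)
  then have "eta N w q j = card ?C"
    by (simp add: eta_def)
  also have "\<dots> = (\<Sum>S\<in>?C. 1)"
    by (rule card_eq_sum)
  also have "\<dots> = (\<Sum>S\<in>Pow N. crit w q j S)"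
    unfolding crit_def using assms by (intro sum.inter_filter) simp
  finally show ?thesis .
qed

lemma crit_notin: "x \<notin> S \<Longrightarrow> crit w q x S = 0"
  by (simp add: crit_def)

lemma crit_insert:
  assumes "finite S" "x \<notin> S"
  shows "crit w q x (insert x S) = swing q (w x) (sum w S)"
  using assms by (simp add: crit_def swing_def)

lemma swing_split:
  fixes a b :: real
  assumes "0 \<le> a" "0 \<le> b"
  shows "swing q a t + swing q a (b + t) + swing q b t + swing q b (a + t)
       = 2 * swing q (a + b) t"
  using assms unfolding swing_def
  by (cases "q \<le> t"; cases "q \<le> a + t"; cases "q \<le> b + t"; cases "q \<le> a + b + t")
     (simp_all add: add.assoc add.left_commute)

lemma sum_Pow_insert:
  assumes "finite M" "a \<notin> M"
  shows "(\<Sum>S\<in>Pow (insert a M). g S) = (\<Sum>T\<in>Pow M. g T + g (insert a T))"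
proof -
  have disj: "Pow M \<inter> insert a ` Pow M = {}"
    using assms(2) by auto
  have "inj_on (insert a) (Pow M)"
    using assms(2) by (intro inj_onI) (metis PowD Diff_insert_absorb subsetD)
  then have "(\<Sum>S\<in>insert a ` Pow M. g S) = (\<Sum>T\<in>Pow M. g (insert a T))"
    by (simp add: sum.reindex)
  moreover have "(\<Sum>S\<in>Pow (insert a M). g S)
      = (\<Sum>S\<in>Pow M. g S) + (\<Sum>S\<in>insert a ` Pow M. g S)"
    unfolding Pow_insert using disj assms(1) by (simp add: sum.union_disjoint)
  ultimately show ?thesis
    by (simp add: sum.distrib)
qed

text \<open>Player i of (M + {i}, w) is split into i1, i2 of (M + {i1, i2}, w').\<close>
locale player_split =
  fixes M :: "'a set" and w w' :: "'a \<Rightarrow> real" and i i1 i2 :: 'a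
  assumes finite_M: "finite M"
    and i_notin: "i \<notin> M" and i1_notin: "i1 \<notin> M" and i2_notin: "i2 \<notin> M"
    and i1_neq_i2: "i1 \<noteq> i2"
    and nonneg_i1: "0 \<le> w' i1" and nonneg_i2: "0 \<le> w' i2"
    and weight_split: "w' i1 + w' i2 = w i"
    and same_weights: "\<forall>x\<in>M. w' x = w x"
begin

abbreviation "N \<equiv> insert i M"
abbreviation "N' \<equiv> insert i1 (insert i2 M)"

lemma finite_subset_M: "T \<subseteq> M \<Longrightarrow> finite T"
  using finite_M finite_subset by blast

lemma new_players_notin:
  assumes "T \<subseteq> M"
  shows "i \<notin> T" and "i1 \<notin> T" and "i2 \<notin> T"
  using assms i_notin i1_notin i2_notin by auto

lemma sum_old: "T \<subseteq> M \<Longrightarrow> sum w' T = sum w T"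
  using same_weights by (intro sum.cong) auto

lemma sum_insert_i: "T \<subseteq> M \<Longrightarrow> sum w (insert i T) = w i + sum w T"
  by (simp add: finite_subset_M new_players_notin)

lemma sum_insert_i1: "T \<subseteq> M \<Longrightarrow> sum w' (insert i1 T) = w' i1 + sum w T"
  by (simp add: finite_subset_M new_players_notin sum_old)

lemma sum_insert_i2: "T \<subseteq> M \<Longrightarrow> sum w' (insert i2 T) = w' i2 + sum w T"
  by (simp add: finite_subset_M new_players_notin sum_old)

lemma sum_insert_both:
  "T \<subseteq> M \<Longrightarrow> sum w' (insert i1 (insert i2 T)) = sum w (insert i T)"
  by (simp add: finite_subset_M new_players_notin i1_neq_i2 sum_old sum_insert_i2
      sum_insert_i weight_split[symmetric])

lemma sum_Pow_N: "(\<Sum>S\<in>Pow N. g S) = (\<Sum>T\<in>Pow M. g T + g (insert i T))"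
  using finite_M i_notin by (rule sum_Pow_insert)

lemma sum_Pow_N':
  "(\<Sum>S\<in>Pow N'. g S) =
   (\<Sum>T\<in>Pow M. g T + g (insert i1 T) + (g (insert i2 T) + g (insert i1 (insert i2 T))))"
proof -
  have "i1 \<notin> insert i2 M"
    using i1_notin i1_neq_i2 by simp
  then have "(\<Sum>S\<in>Pow N'. g S) = (\<Sum>U\<in>Pow (insert i2 M). g U + g (insert i1 U))"
    using finite_M by (intro sum_Pow_insert) simp_all
  also have "\<dots> = (\<Sum>T\<in>Pow M. g T + g (insert i1 T) + (g (insert i2 T) + g (insert i1 (insert i2 T))))"
    using finite_M i2_notin by (rule sum_Pow_insert)
  finally show ?thesis .
qed

lemma contribution_i:
  assumes "T \<subseteq> M"
  shows "crit w q i T + crit w q i (insert i T) = swing q (w' i1 + w' i2) (sum w T)"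
  using assms by (simp add: crit_notin crit_insert finite_subset_M new_players_notin weight_split)

lemma contribution_i1:
  assumes "T \<subseteq> M"
  shows "crit w' q i1 T + crit w' q i1 (insert i1 T)
         + (crit w' q i1 (insert i2 T) + crit w' q i1 (insert i1 (insert i2 T)))
       = swing q (w' i1) (sum w T) + swing q (w' i1) (w' i2 + sum w T)"
  using assms
  by (simp add: crit_notin crit_insert finite_subset_M new_players_notin i1_neq_i2 sum_old
      sum_insert_i2)

lemma contribution_i2:
  assumes "T \<subseteq> M"
  shows "crit w' q i2 T + crit w' q i2 (insert i1 T)
         + (crit w' q i2 (insert i2 T) + crit w' q i2 (insert i1 (insert i2 T)))
       = swing q (w' i2) (sum w T) + swing q (w' i2) (w' i1 + sum w T)"
proof -
  have "insert i1 (insert i2 T) = insert i2 (insert i1 T)"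
    by auto
  then show ?thesis
    using assms
    by (simp add: crit_notin crit_insert finite_subset_M new_players_notin
      i1_neq_i2[symmetric] sum_old sum_insert_i1)
qed

theorem eta_split_sum: "eta N' w' q i1 + eta N' w' q i2 = 2 * eta N w q i"
proof -
  have "eta N' w' q i1 + eta N' w' q i2
      = (\<Sum>T\<in>Pow M. crit w' q i1 T + crit w' q i1 (insert i1 T)
            + (crit w' q i1 (insert i2 T) + crit w' q i1 (insert i1 (insert i2 T)))
          + (crit w' q i2 T + crit w' q i2 (insert i1 T)
            + (crit w' q i2 (insert i2 T) + crit w' q i2 (insert i1 (insert i2 T)))))"
    using finite_M by (simp add: eta_as_sum sum_Pow_N' sum.distrib)
  also have "\<dots> = (\<Sum>T\<in>Pow M. swing q (w' i1) (sum w T) + swing q (w' i1) (w' i2 + sum w T)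
                   + (swing q (w' i2) (sum w T) + swing q (w' i2) (w' i1 + sum w T)))"
    by (intro sum.cong refl) (simp add: contribution_i1 contribution_i2)
  also have "\<dots> = (\<Sum>T\<in>Pow M. 2 * swing q (w' i1 + w' i2) (sum w T))"
    using swing_split[OF nonneg_i1 nonneg_i2] by (simp add: add.assoc)
  also have "\<dots> = 2 * eta N w q i"
    using finite_M by (simp add: eta_as_sum sum_Pow_N contribution_i sum_distrib_left)
  finally show ?thesis .
qed

lemma crit_other_player:
  assumes "x \<in> M" "T \<subseteq> M"
  shows "crit w' q x T = crit w q x T"
    and "crit w' q x (insert i1 (insert i2 T)) = crit w q x (insert i T)"
proof -
  have "T - {x} \<subseteq> M"
    using assms(2) by auto
  moreover have "insert i1 (insert i2 T) - {x} = insert i1 (insert i2 (T - {x}))"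
    and "insert i T - {x} = insert i (T - {x})"
    using assms(1) i_notin i1_notin i2_notin by auto
  ultimately show "crit w' q x T = crit w q x T"
    and "crit w' q x (insert i1 (insert i2 T)) = crit w q x (insert i T)"
    using assms(2) by (simp_all add: crit_def sum_old sum_insert_both)
qed

theorem eta_other_mono:
  assumes "x \<in> M"
  shows "eta N w q x \<le> eta N' w' q x"
  unfolding eta_as_sum[OF finite.insertI[OF finite_M]]
    eta_as_sum[OF finite.insertI[OF finite.insertI[OF finite_M]]] sum_Pow_N sum_Pow_N'
  using assms by (intro sum_mono) (simp add: crit_other_player)

end

theorem mainTheorem2:
  fixes N N' :: "'a set" and w w' :: "'a \<Rightarrow> real" and q :: real and i i1 i2 :: 'a
  assumes "wvg N w q"
    and "split_player N w i i1 i2 N' w'"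
  shows "eta N' w' q i1 + eta N' w' q i2 = 2 * eta N w q i \<and>
         (\<forall>x\<in>N. x \<noteq> i \<longrightarrow> eta N w q x \<le> eta N' w' q x)"
proof -
  let ?M = "N - {i}"
  have split: "player_split ?M w w' i i1 i2"
    using assms unfolding wvg_def split_player_def player_split_def by auto
  have "N = insert i ?M" and "N' = insert i1 (insert i2 ?M)"
    using assms(2) unfolding split_player_def by auto
  then show ?thesis
    using player_split.eta_split_sum[OF split] player_split.eta_other_mono[OF split]
    by auto
qed

end
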